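(* Let $\mathcal{F}=(W,\preceq,\mathcal{V})$ be a finite poset model and $B\subseteq W\times W$ a weak $\pm$-bisimulation. For all $w_1,w_2$ with $B(w_1,w_2)$ and every $\downarrow$-path $\pi_1:[0;k_1]\to W$ from $w_1$, there is a $\downarrow$-path $\pi_2:[0;k_2]\to W$ from $w_2$ such that $B(\pi_1(k_1),\pi_2(k_2))$ and for each $j\in[0;k_2)$ there is $i\in[0;k_1)$ with $B(\pi_1(i),\pi_2(j))$.
   Context: Fix a set PL of proposition letters. A poset model is $\mathcal{F}=(W,\preceq,\mathcal{V})$ with $(W,\preceq)$ a partial order and $\mathcal{V}:\mathrm{PL}\to\mathcal{P}(W)$. $[m;n]=\{i\in\mathbb{N}:m\le i\le n\}$, $[m;n)=\{i:m\le i<n\}$. An undirected path of length $\ell$ from $w$ is $\pi:[0;\ell]\to W$ with $\pi(0)=w$ and, for each $i\in[0;\ell)$, $\pi(i)\preceq\pi(i+1)$ or $\pi(i+1)\preceq\pi(i)$. A $\downarrow$-path is an undirected path of length $\ell\ge1$ with $\pi(\ell)\preceq\pi(\ell-1)$. A $\pm$-path is a $\downarrow$-path of length $\ell\ge2$ with $\pi(0)\preceq\pi(1)$. A weak $\pm$-bisimulation is a symmetric relation $B\subseteq W\times W$ such that whenever $B(w_1,w_2)$: (1) for every $p\in\mathrm{PL}$, $w_1\in\mathcal{V}(p)$ iff $w_2\in\mathcal{V}(p)$; (2) for all $u_1,d_1\in W$ with ($w_1\preceq u_1$ or $u_1\preceq w_1$) and $d_1\preceq u_1$, there is a $\pm$-path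 $\pi_2:[0;\ell_2]\to W$ from $w_2$ with $B(d_1,\pi_2(\ell_2))$ and, for all $j\in[0;\ell_2)$, $B(w_1,\pi_2(j))$ or $B(u_1,\pi_2(j))$. *)

theory Defs
  imports Main
begin

definition poset_model :: "'w set \<Rightarrow> ('w \<Rightarrow> 'w \<Rightarrow> bool) \<Rightarrow> ('p \<Rightarrow> 'w set) \<Rightarrow> bool" where
  "poset_model W le V \<longleftrightarrow>
     (\<forall>x\<in>W. le x x) \<and>
     (\<forall>x\<in>W. \<forall>y\<in>W. le x y \<and> le y x \<longrightarrow> x = y) \<and>
     (\<forall>x\<in>W. \<forall>y\<in>W. \<forall>z\<in>W. le x y \<and> le y z \<longrightarrow> le x z) \<and>
     (\<forall>x y. le x y \<longrightarrow> x \<in> W \<and> y \<in> W) \<and>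
     (\<forall>p. V p \<subseteq> W)"

definition undirected_path :: "'w set \<Rightarrow> ('w \<Rightarrow> 'w \<Rightarrow> bool) \<Rightarrow> (nat \<Rightarrow> 'w) \<Rightarrow> nat \<Rightarrow> 'w \<Rightarrow> bool" where
  "undirected_path W le \<pi> l w \<longleftrightarrow>
     (\<forall>i\<le>l. \<pi> i \<in> W) \<and> \<pi> 0 = w \<and>
     (\<forall>i<l. le (\<pi> i) (\<pi> (Suc i)) \<or> le (\<pi> (Suc i)) (\<pi> i))"

definition down_path :: "'w set \<Rightarrow> ('w \<Rightarrow> 'w \<Rightarrow> bool) \<Rightarrow> (nat \<Rightarrow> 'w) \<Rightarrow> nat \<Rightarrow> 'w \<Rightarrow> bool" where
  "down_path W le \<pi> l w \<longleftrightarrow>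
     undirected_path W le \<pi> l w \<and> 1 \<le> l \<and> le (\<pi> l) (\<pi> (l - 1))"

definition pm_path :: "'w set \<Rightarrow> ('w \<Rightarrow> 'w \<Rightarrow> bool) \<Rightarrow> (nat \<Rightarrow> 'w) \<Rightarrow> nat \<Rightarrow> 'w \<Rightarrow> bool" where
  "pm_path W le \<pi> l w \<longleftrightarrow>
     down_path W le \<pi> l w \<and> 2 \<le> l \<and> le (\<pi> 0) (\<pi> 1)"

definition weak_pm_bisim :: "'w set \<Rightarrow> ('w \<Rightarrow> 'w \<Rightarrow> bool) \<Rightarrow> ('p \<Rightarrow> 'w set) \<Rightarrow> ('w \<Rightarrow> 'w \<Rightarrow> bool) \<Rightarrow> bool" where
  "weak_pm_bisim W le V B \<longleftrightarrow>
     (\<forall>x y. B x y \<longrightarrow> x \<in> W \<and> y \<in> W) \<and>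
     (\<forall>x y. B x y \<longrightarrow> B y x) \<and>
     (\<forall>w1 w2. B w1 w2 \<longrightarrow>
        (\<forall>p. w1 \<in> V p \<longleftrightarrow> w2 \<in> V p) \<and>
        (\<forall>u1 d1. (le w1 u1 \<or> le u1 w1) \<and> le d1 u1 \<longrightarrow>
           (\<exists>\<pi>2 l2. pm_path W le \<pi>2 l2 w2 \<and> B d1 (\<pi>2 l2) \<and>
              (\<forall>j<l2. B w1 (\<pi>2 j) \<or> B u1 (\<pi>2 j)))))"

end

theory Submission
  imports Defs
begin

text \<open>Induction along \<open>\<pi>\<^sub>1\<close>: each undirected step \<open>\<pi>\<^sub>1 i \<sim> \<pi>\<^sub>1 (i+1)\<close> is matched by
  appending to the simulating path the \<open>\<plusminus>\<close>-path provided by clause (2) of the bisimulation,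
  taking \<open>u\<^sub>1 = d\<^sub>1 = \<pi>\<^sub>1 (i+1)\<close>.  The final downward step of \<open>\<pi>\<^sub>1\<close> is matched the same way
  with \<open>u\<^sub>1 = \<pi>\<^sub>1 (k\<^sub>1-1)\<close> and \<open>d\<^sub>1 = \<pi>\<^sub>1 k\<^sub>1\<close>; since every \<open>\<plusminus>\<close>-path ends with a downward
  step, so does the result.\<close>

definition path_append :: "(nat \<Rightarrow> 'w) \<Rightarrow> nat \<Rightarrow> (nat \<Rightarrow> 'w) \<Rightarrow> nat \<Rightarrow> 'w" where
  "path_append p m q = (\<lambda>j. if j \<le> m then p j else q (j - m))"

lemma path_append_left: "j \<le> m \<Longrightarrow> path_append p m q j = p j"
  by (simp add: path_append_def)

lemma path_append_right: "q 0 = p m \<Longrightarrow> m \<le> j \<Longrightarrow> path_append p m q j = q (j - m)"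
  by (cases "j = m") (simp_all add: path_append_def)

lemma undirected_path_append:
  assumes p: "undirected_path W le p m a" and q: "undirected_path W le q l (p m)"
  shows "undirected_path W le (path_append p m q) (m + l) a"
  unfolding undirected_path_def
proof (intro conjI allI impI)
  have q0: "q 0 = p m" using q by (simp add: undirected_path_def)
  show "path_append p m q 0 = a"
    using p by (simp add: path_append_left undirected_path_def)
  fix i
  show "i \<le> m + l \<Longrightarrow> path_append p m q i \<in> W"
    using p q by (cases "i \<le> m") (auto simp: undirected_path_def path_append_def)
  assume i: "i < m + l"
  show "le (path_append p m q i) (path_append p m q (Suc i)) \<or>
        le (path_append p m q (Suc i)) (path_append p m q i)"
  proof (cases "i < m")
    case True
    then show ?thesis using p by (simp add: path_append_left undirected_path_def)
  next
    case False
    then have "i - m < l" using i by auto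
    then have "le (q (i - m)) (q (Suc (i - m))) \<or> le (q (Suc (i - m))) (q (i - m))"
      using q by (simp add: undirected_path_def)
    moreover have "Suc i - m = Suc (i - m)" using False by simp
    ultimately show ?thesis
      using False by (simp add: path_append_right q0)
  qed
qed

lemma path_append_last:
  assumes "q 0 = p m"
  shows "path_append p m q (m + l) = q l"
  by (simp add: path_append_right assms)

lemma down_path_append:
  assumes p: "undirected_path W le p m a" and q: "down_path W le q l (p m)"
  shows "down_path W le (path_append p m q) (m + l) a"
proof -
  have qu: "undirected_path W le q l (p m)" and l: "1 \<le> l" and last: "le (q l) (q (l - 1))"
    using q by (auto simp: down_path_def)
  have q0: "q 0 = p m" using qu by (simp add: undirected_path_def)
  have "path_append p m q (m + l - 1) = q (l - 1)"
    using l by (simp add: path_append_right q0)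
  then show ?thesis
    using undirected_path_append[OF p qu] l last
    by (simp add: down_path_def path_append_last q0)
qed

lemma poset_model_refl: "poset_model W le V \<Longrightarrow> x \<in> W \<Longrightarrow> le x x"
  unfolding poset_model_def by blast

lemma pm_path_imp_down_path: "pm_path W le \<pi> l w \<Longrightarrow> down_path W le \<pi> l w"
  by (simp add: pm_path_def)

lemma weak_pm_bisim_in_carrier:
  "weak_pm_bisim W le V B \<Longrightarrow> B x y \<Longrightarrow> x \<in> W \<and> y \<in> W"
  by (simp add: weak_pm_bisim_def)

lemma weak_pm_bisim_zigzag:
  assumes "weak_pm_bisim W le V B" "B w1 w2" "le w1 u1 \<or> le u1 w1" "le d1 u1"
  shows "\<exists>\<pi>2 l2. down_path W le \<pi>2 l2 w2 \<and> B d1 (\<pi>2 l2) \<and>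
           (\<forall>j<l2. B w1 (\<pi>2 j) \<or> B u1 (\<pi>2 j))"
  using assms unfolding weak_pm_bisim_def by (blast dest: pm_path_imp_down_path)

lemma weak_pm_bisim_extend_path:
  assumes bisim: "weak_pm_bisim W le V B"
    and p: "undirected_path W le p m w" and rel: "B a (p m)"
    and step: "le a u \<or> le u a" and below: "le d u"
  shows "\<exists>r k. down_path W le r k w \<and> B d (r k) \<and>
           (\<forall>j<k. (j < m \<and> r j = p j) \<or> B a (r j) \<or> B u (r j))"
proof -
  obtain q l where q: "down_path W le q l (p m)" "B d (q l)"
      and q_rel: "\<forall>j<l. B a (q j) \<or> B u (q j)"
    using weak_pm_bisim_zigzag[OF bisim rel step below] by blast
  have q0: "q 0 = p m" using q(1) by (simp add: down_path_def undirected_path_def)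
  have "(j < m \<and> path_append p m q j = p j) \<or> B a (path_append p m q j) \<or> B u (path_append p m q j)"
    if "j < m + l" for j
  proof (cases "j < m")
    case True
    then show ?thesis by (simp add: path_append_left)
  next
    case False
    then show ?thesis
      using q_rel that by (simp add: path_append_right q0)
  qed
  moreover have "path_append p m q (m + l) = q l"
    using q0 by (rule path_append_last)
  ultimately show ?thesis
    using down_path_append[OF p q(1)] q(2)
    by (intro exI[of _ "path_append p m q"] exI[of _ "m + l"]) simp
qed

lemma weak_pm_bisim_undirected_path:
  assumes model: "poset_model W le V" and bisim: "weak_pm_bisim W le V B"
  shows "undirected_path W le \<pi>1 n w1 \<Longrightarrow> B w1 w2 \<Longrightarrow>
    \<exists>\<pi>2 m. undirected_path W le \<pi>2 m w2 \<and> B (\<pi>1 n) (\<pi>2 m) \<and>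
           (\<forall>j<m. \<exists>i\<le>n. B (\<pi>1 i) (\<pi>2 j))"
proof (induction n)
  case 0
  then have "w2 \<in> W" "\<pi>1 0 = w1"
    using weak_pm_bisim_in_carrier[OF bisim] by (auto simp: undirected_path_def)
  then show ?case
    using 0 by (intro exI[of _ "\<lambda>_. w2"] exI[of _ 0]) (simp add: undirected_path_def)
next
  case (Suc n)
  have "undirected_path W le \<pi>1 n w1"
    using Suc.prems(1) by (simp add: undirected_path_def)
  then obtain p m where p: "undirected_path W le p m w2" "B (\<pi>1 n) (p m)"
      and p_rel: "\<forall>j<m. \<exists>i\<le>n. B (\<pi>1 i) (p j)"
    using Suc.IH Suc.prems(2) by blast
  have step: "le (\<pi>1 n) (\<pi>1 (Suc n)) \<or> le (\<pi>1 (Suc n)) (\<pi>1 n)"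
    and "\<pi>1 (Suc n) \<in> W"
    using Suc.prems(1) by (auto simp: undirected_path_def)
  then have refl: "le (\<pi>1 (Suc n)) (\<pi>1 (Suc n))"
    using model by (simp add: poset_model_refl)
  obtain r k where r: "down_path W le r k w2" "B (\<pi>1 (Suc n)) (r k)"
      and r_rel: "\<forall>j<k. (j < m \<and> r j = p j) \<or> B (\<pi>1 n) (r j) \<or> B (\<pi>1 (Suc n)) (r j)"
    using weak_pm_bisim_extend_path[OF bisim p step refl] by blast
  have "\<exists>i\<le>Suc n. B (\<pi>1 i) (r j)" if j: "j < k" for j
  proof -
    consider "j < m" "r j = p j" | "B (\<pi>1 n) (r j)" | "B (\<pi>1 (Suc n)) (r j)"
      using r_rel j by blast
    then show ?thesis
    proof cases
      case 1
      then obtain i where "i \<le> n" "B (\<pi>1 i) (r j)" using p_rel by auto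
      then show ?thesis using le_SucI by blast
    next
      case 2
      then show ?thesis using le_Suc_eq by blast
    qed auto
  qed
  then show ?case
    using r by (auto simp: down_path_def)
qed

theorem lemma9:
  fixes W :: "'w set" and le :: "'w \<Rightarrow> 'w \<Rightarrow> bool" and V :: "'p \<Rightarrow> 'w set"
    and B :: "'w \<Rightarrow> 'w \<Rightarrow> bool"
  assumes "poset_model W le V" and "finite W"
    and "weak_pm_bisim W le V B"
    and "B w1 w2"
    and "down_path W le \<pi>1 k1 w1"
  shows "\<exists>\<pi>2 k2. down_path W le \<pi>2 k2 w2 \<and> B (\<pi>1 k1) (\<pi>2 k2) \<and>
           (\<forall>j<k2. \<exists>i<k1. B (\<pi>1 i) (\<pi>2 j))"
proof -
  let ?u = "\<pi>1 (k1 - 1)"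
  have k1: "1 \<le> k1" and last: "le (\<pi>1 k1) ?u" and \<pi>1: "undirected_path W le \<pi>1 k1 w1"
    using assms(5) by (auto simp: down_path_def)
  have "undirected_path W le \<pi>1 (k1 - 1) w1" and "?u \<in> W"
    using \<pi>1 by (auto simp: undirected_path_def)
  then obtain p m where p: "undirected_path W le p m w2" "B ?u (p m)"
      and p_rel: "\<forall>j<m. \<exists>i\<le>k1 - 1. B (\<pi>1 i) (p j)"
    using weak_pm_bisim_undirected_path[OF assms(1,3)] assms(4) by blast
  have "le ?u ?u" using assms(1) \<open>?u \<in> W\<close> by (simp add: poset_model_refl)
  then obtain r k where r: "down_path W le r k w2" "B (\<pi>1 k1) (r k)"
      and r_rel: "\<forall>j<k. (j < m \<and> r j = p j) \<or> B ?u (r j) \<or> B ?u (r j)"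
    using weak_pm_bisim_extend_path[OF assms(3) p] last by blast
  have "\<exists>i<k1. B (\<pi>1 i) (r j)" if j: "j < k" for j
  proof -
    consider "j < m" "r j = p j" | "B ?u (r j)"
      using r_rel j by blast
    then show ?thesis
    proof cases
      case 1
      then obtain i where "i \<le> k1 - 1" "B (\<pi>1 i) (r j)" using p_rel by auto
      then show ?thesis using k1 by (intro exI[of _ i]) simp
    next
      case 2
      then show ?thesis using k1 by (intro exI[of _ "k1 - 1"]) simp
    qed
  qed
  then show ?thesis using r by blast
qed

end
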